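(* For every positive integer $n$, as an identity of rational functions in $x$, $$\sum_{k=1}^n\binom{x}{k}\binom{-x}{k}H_k^{(2)}=-\frac{1}{x^2}+\binom{x-1}{n}\binom{-x-1}{n}\left(\frac{1}{x^2}+H_n^{(2)}\right).$$
   Context: $\binom{x}{k}=x(x-1)\cdots(x-k+1)/k!$ for an indeterminate $x$ and integer $k\ge0$. $H_n^{(2)}=\sum_{j=1}^n j^{-2}$. *)

theory Defs
  imports Complex_Main
begin

definition H2 :: "nat \<Rightarrow> 'a::field_char_0" where
  "H2 n = (\<Sum>j=1..n. 1 / (of_nat j)^2)"

end

theory Submission
  imports Defs
begin

text \<open>Write \<open>P k = (x gchoose k) * (-x gchoose k)\<close> and \<open>Q k = (x - 1 gchoose k) * (-x - 1 gchoose k)\<close>.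
  Both \<open>Q n\<close> and \<open>Q (n + 1)\<close> are multiples of \<open>P (n + 1)\<close>, namely
  \<open>Q n = - (n + 1)\<^sup>2 / x\<^sup>2 * P (n + 1)\<close> and \<open>Q (n + 1) = (1 - (n + 1)\<^sup>2 / x\<^sup>2) * P (n + 1)\<close>.
  With these, the increment of the right-hand side from \<open>n\<close> to \<open>n + 1\<close> collapses to
  \<open>P (n + 1) * H2 (n + 1)\<close>, so the identity follows by induction from the trivial case \<open>n = 0\<close>.\<close>

lemma H2_Suc: "H2 (Suc n) = H2 n + 1 / (of_nat (Suc n))^2"
  by (simp add: H2_def)

lemma gbinomial_Suc_eq: "(a gchoose Suc k) = (a - of_nat k) / of_nat (Suc k) * (a gchoose k)"
  for a :: "'a::field_char_0"
  using gbinomial_mult_1[of a k] by (simp add: field_simps del: of_nat_Suc)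

lemma gbinomial_minus_one:
  fixes a :: "'a::field_char_0"
  assumes "a \<noteq> 0"
  shows "((a - 1) gchoose k) = (a - of_nat k) / a * (a gchoose k)"
  using gbinomial_absorb_comp[of a k] assms by (simp add: field_simps)

lemma gbinomial_minus_one_mult_neg:
  fixes x :: "'a::field_char_0"
  assumes "x \<noteq> 0"
  shows "((x - 1) gchoose k) * ((-x - 1) gchoose k)
       = (1 - (of_nat k)^2 / x^2) * ((x gchoose k) * ((-x) gchoose k))"
  using assms
  by (simp add: gbinomial_minus_one field_simps power2_eq_square)

lemma gbinomial_minus_one_mult_neg_eq_Suc:
  fixes x :: "'a::field_char_0"
  assumes "x \<noteq> 0"
  shows "((x - 1) gchoose k) * ((-x - 1) gchoose k)
       = - (of_nat (Suc k) ^ 2 / x^2) * ((x gchoose Suc k) * ((-x) gchoose Suc k))"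
  using assms
  by (simp add: gbinomial_minus_one gbinomial_Suc_eq field_simps power2_eq_square
           del: of_nat_Suc)

lemma sum_gbinomial_mult_neg_H2:
  fixes x :: "'a::field_char_0"
  assumes "x \<noteq> 0"
  shows "(\<Sum>k=1..n. (x gchoose k) * ((-x) gchoose k) * H2 k)
       = - 1 / x^2 + ((x - 1) gchoose n) * ((-x - 1) gchoose n) * (1 / x^2 + H2 n)"
proof (induction n)
  case 0
  then show ?case by (simp add: H2_def)
next
  case (Suc n)
  define m :: 'a where "m = of_nat (Suc n)"
  define p where "p = (x gchoose Suc n) * ((-x) gchoose Suc n)"
  have "m \<noteq> 0"
    by (simp add: m_def del: of_nat_Suc)
  have "(\<Sum>k=1..Suc n. (x gchoose k) * ((-x) gchoose k) * H2 k)
      = - 1 / x^2 - m^2 / x^2 * p * (1 / x^2 + H2 (Suc n) - 1 / m^2) + p * H2 (Suc n)"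
    using Suc.IH gbinomial_minus_one_mult_neg_eq_Suc[OF assms, of n]
    by (simp add: H2_Suc m_def p_def)
  also have "\<dots> = - 1 / x^2 + (1 - m^2 / x^2) * p * (1 / x^2 + H2 (Suc n))"
    using assms \<open>m \<noteq> 0\<close> by (simp add: field_simps power2_eq_square)
  also have "\<dots> = - 1 / x^2
      + ((x - 1) gchoose Suc n) * ((-x - 1) gchoose Suc n) * (1 / x^2 + H2 (Suc n))"
    by (simp add: gbinomial_minus_one_mult_neg[OF assms] m_def p_def del: of_nat_Suc)
  finally show ?case .
qed

theorem lemma2p1:
  fixes x :: "'a::field_char_0" and n :: nat
  assumes "n \<ge> 1" and "x \<noteq> 0"
  shows "(\<Sum>k=1..n. (x gchoose k) * ((-x) gchoose k) * H2 k)
       = - 1 / x^2 + ((x - 1) gchoose n) * ((-x - 1) gchoose n) * (1 / x^2 + H2 n)"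
  using sum_gbinomial_mult_neg_H2[OF assms(2)] .

end
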